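(* Let $\mathbb{F}$ be a field with $\mathrm{char}(\mathbb{F})\neq 2,3$, let $k\in\mathbb{N}$ and $\beta_3,\dots,\beta_{3k}\in\mathbb{F}$ with $\beta_{3k}\neq0$, and let $x=\sum_{j=1}^k\beta_{3j}p_{\bar1,3j}$. Then the ideal $I=(x)$ of $\hat{\mathcal{H}}$ generated by $x$ has basis $$x,\quad x^{\tau_0},\quad s_ix,\quad (s_ix)^{\tau_0}\qquad (i\in3\mathbb{N}).$$
   Context: Notation: $\mathbb{N}=\{1,2,3,\dots\}$, $3\mathbb{N}=\{3,6,9,\dots\}$; for $r\in\mathbb{Z}$, $\bar r=r+3\mathbb{Z}\in\mathbb{Z}_3$. The algebra $\hat{\mathcal{H}}$ is the commutative $\mathbb{F}$-algebra with basis $\{a_i:i\in\mathbb{Z}\}\cup\{s_j:j\in\mathbb{N}\}\cup\{p_{\bar r,k}:\bar r\in\{\bar1,\bar2\},\ k\in 3\mathbb{N}\}$, where $s_0=0$, $p_{\bar r,j}=0$ for all $\bar r$ whenever $j\notin 3\mathbb{N}$, $p_{\bar 0,j}=-p_{\bar1,j}-p_{\bar2,j}$, $z_{\bar r,j}=p_{\bar r+\bar1,j}-p_{\bar r-\bar1,j}$, and for $i,i'\in\mathbb{Z}$, $j,l\in\mathbb{N}$, $h,k\in3\mathbb{N}$, $\bar r,\bar t\in\mathbb{Z}_3$: (H1) $a_ia_{i'}=\tfrac12(a_i+a_{i'})+s_{|i-i'|}+z_{\bar\imath,|i-i'|}$; (H2) $a_is_j=-\tfrac34a_i+\tfrac38(a_{i-j}+a_{i+j})+\tfrac32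 s_j-z_{\bar\imath,j}$; (H3) $a_ip_{\bar r,k}=\tfrac32p_{\bar r,k}-p_{-(\bar\imath+\bar r),k}$; (H4) $s_js_l=\tfrac34(s_j+s_l)-\tfrac38(s_{|j-l|}+s_{j+l})$; (H5) $s_jp_{\bar r,k}=\tfrac34(p_{\bar r,j}+p_{\bar r,k})-\tfrac38(p_{\bar r,|j-k|}+p_{\bar r,j+k})$; (H6) $p_{\bar r,h}p_{\bar t,k}=\tfrac14(z_{-(\bar r+\bar t),h}+z_{-(\bar r+\bar t),k})-\tfrac18(z_{-(\bar r+\bar t),|h-k|}+z_{-(\bar r+\bar t),h+k})$. $\tau_0$ denotes the automorphism of $\hat{\mathcal{H}}$ given by $a_i\mapsto a_{-i}$, $s_j\mapsto s_j$, $p_{\bar r,k}\mapsto -p_{-\bar r,k}$, and $y^{\tau_0}$ is the image of $y$. *)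

theory Defs
  imports Main "HOL-Library.Function_Algebras"
begin

text \<open>Basis indices of the algebra H-hat:
  A i  ~ a_i (i in Z);  S j ~ s_j (j >= 1);  P True k ~ p_{1,k}, P False k ~ p_{2,k} (k in 3N).\<close>

datatype hidx = A int | S nat | P bool nat

fun hvalid :: "hidx \<Rightarrow> bool" where
  "hvalid (A i) = True"
| "hvalid (S j) = (0 < j)"
| "hvalid (P r k) = (0 < k \<and> 3 dvd k)"

type_synonym 'a hvec = "hidx \<Rightarrow> 'a"

definition hsupp :: "'a::zero hvec \<Rightarrow> hidx set" where
  "hsupp v = {b. v b \<noteq> 0}"

definition Hcarrier :: "'a::field hvec set" where
  "Hcarrier = {v. finite (hsupp v) \<and> (\<forall>b\<in>hsupp v. hvalid b)}"

definition sc :: "'a::field \<Rightarrow> 'a hvec \<Rightarrow> 'a hvec" where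
  "sc c v = (\<lambda>b. c * v b)"

definition ev :: "hidx \<Rightarrow> 'a::field hvec" where
  "ev b = (\<lambda>c. if c = b then 1 else 0)"

definition av :: "int \<Rightarrow> 'a::field hvec" where
  "av i = ev (A i)"

definition sv :: "nat \<Rightarrow> 'a::field hvec" where
  "sv j = (if j = 0 then 0 else ev (S j))"

definition pv :: "int \<Rightarrow> nat \<Rightarrow> 'a::field hvec" where
  "pv r j = (if j = 0 \<or> \<not> 3 dvd j then 0
             else if r mod 3 = 1 then ev (P True j)
             else if r mod 3 = 2 then ev (P False j)
             else - ev (P True j) - ev (P False j))"

definition zv :: "int \<Rightarrow> nat \<Rightarrow> 'a::field hvec" where
  "zv r j = pv (r + 1) j - pv (r - 1) j"

fun rr :: "bool \<Rightarrow> int" where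
  "rr True = 1" | "rr False = 2"

definition prodAS :: "int \<Rightarrow> nat \<Rightarrow> 'a::field hvec" where
  "prodAS i j = sc (-3/4) (av i) + sc (3/8) (av (i - int j) + av (i + int j))
                + sc (3/2) (sv j) - zv i j"

definition prodAP :: "int \<Rightarrow> bool \<Rightarrow> nat \<Rightarrow> 'a::field hvec" where
  "prodAP i r k = sc (3/2) (pv (rr r) k) - pv (- (i + rr r)) k"

definition prodSP :: "nat \<Rightarrow> bool \<Rightarrow> nat \<Rightarrow> 'a::field hvec" where
  "prodSP j r k = sc (3/4) (pv (rr r) j + pv (rr r) k)
                  - sc (3/8) (pv (rr r) (nat \<bar>int j - int k\<bar>) + pv (rr r) (j + k))"

fun bprod :: "hidx \<Rightarrow> hidx \<Rightarrow> 'a::field hvec" where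
  "bprod (A i) (A i') = sc (1/2) (av i + av i') + sv (nat \<bar>i - i'\<bar>) + zv i (nat \<bar>i - i'\<bar>)"
| "bprod (A i) (S j) = prodAS i j"
| "bprod (S j) (A i) = prodAS i j"
| "bprod (A i) (P r k) = prodAP i r k"
| "bprod (P r k) (A i) = prodAP i r k"
| "bprod (S j) (S l) = sc (3/4) (sv j + sv l) - sc (3/8) (sv (nat \<bar>int j - int l\<bar>) + sv (j + l))"
| "bprod (S j) (P r k) = prodSP j r k"
| "bprod (P r k) (S j) = prodSP j r k"
| "bprod (P r h) (P t k) =
     sc (1/4) (zv (- (rr r + rr t)) h + zv (- (rr r + rr t)) k)
     - sc (1/8) (zv (- (rr r + rr t)) (nat \<bar>int h - int k\<bar>) + zv (- (rr r + rr t)) (h + k))"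

definition hmult :: "'a::field hvec \<Rightarrow> 'a hvec \<Rightarrow> 'a hvec" where
  "hmult u v = (\<lambda>c. \<Sum>b\<in>hsupp u. \<Sum>d\<in>hsupp v. u b * v d * bprod b d c)"

text \<open>The automorphism tau_0: a_i -> a_{-i}, s_j -> s_j, p_{r,k} -> - p_{-r,k}.\<close>
definition tau0 :: "'a::field hvec \<Rightarrow> 'a hvec" where
  "tau0 v = (\<lambda>b. case b of A i \<Rightarrow> v (A (- i)) | S j \<Rightarrow> v (S j) | P r k \<Rightarrow> - v (P (\<not> r) k))"

inductive_set hideal :: "'a::field hvec \<Rightarrow> 'a hvec set" for x where
  gen: "x \<in> hideal x"
| zero: "0 \<in> hideal x"
| add: "u \<in> hideal x \<Longrightarrow> v \<in> hideal x \<Longrightarrow> u + v \<in> hideal x"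
| smult: "v \<in> hideal x \<Longrightarrow> sc c v \<in> hideal x"
| mult: "y \<in> Hcarrier \<Longrightarrow> v \<in> hideal x \<Longrightarrow> hmult y v \<in> hideal x"

definition hspan :: "('i \<Rightarrow> 'a::field hvec) \<Rightarrow> 'i set \<Rightarrow> 'a hvec set" where
  "hspan g J = {v. \<exists>F c. finite F \<and> F \<subseteq> J \<and> v = (\<lambda>b. \<Sum>j\<in>F. c j * g j b)}"

definition hlin_indep :: "('i \<Rightarrow> 'a::field hvec) \<Rightarrow> 'i set \<Rightarrow> bool" where
  "hlin_indep g J = (\<forall>F c. finite F \<longrightarrow> F \<subseteq> J \<longrightarrow> (\<lambda>b. \<Sum>j\<in>F. c j * g j b) = 0
                         \<longrightarrow> (\<forall>j\<in>F. c j = 0))"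

definition is_hbasis :: "('i \<Rightarrow> 'a::field hvec) \<Rightarrow> 'i set \<Rightarrow> 'a hvec set \<Rightarrow> bool" where
  "is_hbasis g J V = (hlin_indep g J \<and> hspan g J = V)"

end

theory Submission
  imports Defs
begin

(* Write x_c = \<Sum>_j \<beta>_3j p_{c,3j} for a residue c, so that x = x_1 and x^\<tau>0 = -x_2, and
   y_{c,i} = s_i x_c.  By (H2)-(H6) the product of a basis element of H-hat with x_c or y_{c,i}
   is again a combination of the x_c' and y_{c',i'}; for s_j y_{c,i} this is the identity
   s_j s_i = 3/4 (s_i + s_j) - 3/8 (s_|i-j| + s_(i+j)) acting on the p's.  Since
   x_0 = -x_1 - x_2 and y_{c,i} = 3/4 x_c when 3 does not divide i, all these products lie in
   the span of the proposed basis, which is therefore an ideal containing x.  Conversely, on the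
   span of the p's the automorphism \<tau>0 acts as a_0 - 3/2, so the basis lies in (x).
   Independence is triangular: the basis vector indexed by (i, t) is the only one with first
   index at most i that involves the coordinate p_{\<not>t, i+3k}, where its coefficient is a
   nonzero multiple of \<beta>_3k. *)

section \<open>Finitely supported vectors and the product\<close>

lemma sum_fun_apply: "(\<Sum>j\<in>F. f j) x = (\<Sum>j\<in>F. f j x :: 'b::comm_monoid_add)"
  by (induction F rule: infinite_finite_induct) simp_all

lemma sc_apply [simp]: "sc a v b = a * v b"
  by (simp add: sc_def)

lemma sc_zero [simp]: "sc a 0 = 0"
  and sc_zero_left [simp]: "sc 0 v = 0"
  and sc_one [simp]: "sc 1 v = v"
  and sc_minus_one [simp]: "sc (-1) v = - v"
  by (simp_all add: fun_eq_iff)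

lemma sc_add: "sc a (u + v) = sc a u + sc a v"
  and sc_diff: "sc a (u - v) = sc a u - sc a v"
  and sc_minus: "sc a (- v) = - sc a v"
  and sc_add_left: "sc (a + b) v = sc a v + sc b v"
  and sc_sc: "sc a (sc b v) = sc (a * b) v"
  and sc_commute: "sc a (sc b v) = sc b (sc a v)"
  by (simp_all add: fun_eq_iff algebra_simps)

lemma sc_sum: "sc a (\<Sum>j\<in>F. f j) = (\<Sum>j\<in>F. sc a (f j))"
  by (simp add: fun_eq_iff sum_fun_apply sum_distrib_left)

lemma hsupp_ev [simp]: "hsupp (ev b :: 'a::field hvec) = {b}"
  by (auto simp: hsupp_def ev_def)

lemma hsupp_zero [simp]: "hsupp 0 = {}"
  by (simp add: hsupp_def)

lemma hsupp_add: "hsupp (u + v :: 'a::field hvec) \<subseteq> hsupp u \<union> hsupp v"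
  by (auto simp: hsupp_def)

lemma hsupp_uminus [simp]: "hsupp (- v :: 'a::field hvec) = hsupp v"
  by (simp add: hsupp_def)

lemma hsupp_sc: "hsupp (sc a v) \<subseteq> hsupp v"
  by (auto simp: hsupp_def)

lemma finite_hsupp_add [intro]:
  "finite (hsupp u) \<Longrightarrow> finite (hsupp v) \<Longrightarrow> finite (hsupp (u + v :: 'a::field hvec))"
  by (meson finite_UnI finite_subset hsupp_add)

lemma finite_hsupp_diff [intro]:
  "finite (hsupp u) \<Longrightarrow> finite (hsupp v) \<Longrightarrow> finite (hsupp (u - v :: 'a::field hvec))"
  using finite_hsupp_add[of u "- v"] by simp

lemma finite_hsupp_sc [intro]: "finite (hsupp v) \<Longrightarrow> finite (hsupp (sc a v))"
  by (meson finite_subset hsupp_sc)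

lemma finite_hsupp_sum [intro]:
  "(\<And>j. j \<in> F \<Longrightarrow> finite (hsupp (f j))) \<Longrightarrow> finite (hsupp (\<Sum>j\<in>F. f j :: 'a::field hvec))"
  by (induction F rule: infinite_finite_induct) auto

lemma hmult_eq_sum_over:
  assumes "finite D" "hsupp v \<subseteq> D"
  shows "hmult y v = (\<lambda>c. \<Sum>b\<in>hsupp y. \<Sum>d\<in>D. y b * v d * bprod b d c)"
  unfolding hmult_def
  by (intro ext sum.cong refl sum.mono_neutral_left) (use assms in \<open>auto simp: hsupp_def\<close>)

lemma hmult_ev_ev: "hmult (ev b) (ev d) = bprod b d"
  unfolding hmult_def hsupp_ev by (simp add: ev_def)

lemma hmult_eq_sum_hmult_ev: "hmult y v = (\<Sum>b\<in>hsupp y. sc (y b) (hmult (ev b) v))"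
  unfolding hmult_def hsupp_ev
  by (simp add: fun_eq_iff sum_fun_apply sum_distrib_left ev_def mult.assoc)

(* Linearity is only asked for on finitely supported vectors: hmult sums over supports and
   returns 0 when they are infinite. *)

definition hlinear :: "('a::field hvec \<Rightarrow> 'a hvec) \<Rightarrow> bool" where
  "hlinear L \<longleftrightarrow>
     (\<forall>u v. finite (hsupp u) \<longrightarrow> finite (hsupp v) \<longrightarrow> L (u + v) = L u + L v) \<and>
     (\<forall>a v. finite (hsupp v) \<longrightarrow> L (sc a v) = sc a (L v))"

context
  fixes L :: "'a::field hvec \<Rightarrow> 'a hvec"
  assumes L: "hlinear L"
begin

lemma hlinear_add: "finite (hsupp u) \<Longrightarrow> finite (hsupp v) \<Longrightarrow> L (u + v) = L u + L v"
  using L by (simp add: hlinear_def)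

lemma hlinear_sc: "finite (hsupp v) \<Longrightarrow> L (sc a v) = sc a (L v)"
  using L by (simp add: hlinear_def)

lemma hlinear_zero: "L 0 = 0"
  using hlinear_sc[of 0 0] by (simp add: fun_eq_iff)

lemma hlinear_uminus: "finite (hsupp v) \<Longrightarrow> L (- v) = - L v"
  using hlinear_sc[of v "-1"] by simp

lemma hlinear_diff: "finite (hsupp u) \<Longrightarrow> finite (hsupp v) \<Longrightarrow> L (u - v) = L u - L v"
  using hlinear_add[of u "- v"] hlinear_uminus[of v] by simp

lemma hlinear_sum:
  "(\<And>j. j \<in> F \<Longrightarrow> finite (hsupp (f j))) \<Longrightarrow> L (\<Sum>j\<in>F. f j) = (\<Sum>j\<in>F. L (f j))"
proof (induction F rule: infinite_finite_induct)
  case (insert j F)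
  then have "L (f j + sum f F) = L (f j) + (\<Sum>j\<in>F. L (f j))"
    by (subst hlinear_add) (auto intro!: finite_hsupp_sum)
  then show ?case
    by (simp only: sum.insert[OF insert.hyps])
qed (simp_all add: hlinear_zero)

end

lemma hlinear_hmult: "hlinear (hmult y)"
proof -
  have "hmult y (u + v) = hmult y u + hmult y v"
    if "finite (hsupp u)" "finite (hsupp v)" for u v :: "'a hvec"
  proof -
    let ?D = "hsupp u \<union> hsupp v"
    have "finite ?D" "hsupp (u + v) \<subseteq> ?D"
      using that hsupp_add by auto
    then show ?thesis
      using that
      by (simp add: hmult_eq_sum_over[of ?D] fun_eq_iff distrib_left distrib_right sum.distrib)
  qed
  moreover have "hmult y (sc a v) = sc a (hmult y v)" if "finite (hsupp v)" for a v
    using that hsupp_sc[of a v]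
    by (simp add: hmult_eq_sum_over[of "hsupp v"] fun_eq_iff sum_distrib_left algebra_simps)
  ultimately show ?thesis
    by (simp add: hlinear_def)
qed

lemma hlinear_tau0: "hlinear tau0"
  by (simp add: hlinear_def tau0_def fun_eq_iff algebra_simps split: hidx.split)

section \<open>Spans, ideals and triangular families\<close>

lemma hspan_iff:
  "v \<in> hspan g J \<longleftrightarrow> (\<exists>F c. finite F \<and> F \<subseteq> J \<and> v = (\<Sum>j\<in>F. sc (c j) (g j)))"
proof -
  have "(\<lambda>b. \<Sum>j\<in>F. c j * g j b) = (\<Sum>j\<in>F. sc (c j) (g j))" for F c
    by (simp add: fun_eq_iff sum_fun_apply)
  then show ?thesis
    by (simp add: hspan_def)
qed

lemma hspan_zero: "0 \<in> hspan g J"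
  unfolding hspan_iff by (rule exI[of _ "{}"]) simp

lemma hspan_base: "j \<in> J \<Longrightarrow> g j \<in> hspan g J"
  unfolding hspan_iff by (rule exI[of _ "{j}"], rule exI[of _ "\<lambda>_. 1"]) simp

lemma hspan_add:
  assumes "u \<in> hspan g J" "v \<in> hspan g J"
  shows "u + v \<in> hspan g J"
proof -
  obtain F1 c1 where F1: "finite F1" "F1 \<subseteq> J" "u = (\<Sum>j\<in>F1. sc (c1 j) (g j))"
    using assms(1) by (auto simp: hspan_iff)
  obtain F2 c2 where F2: "finite F2" "F2 \<subseteq> J" "v = (\<Sum>j\<in>F2. sc (c2 j) (g j))"
    using assms(2) by (auto simp: hspan_iff)
  let ?F = "F1 \<union> F2"
  define c where "c j = (if j \<in> F1 then c1 j else 0) + (if j \<in> F2 then c2 j else 0)" for j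
  have extend: "(\<Sum>j\<in>F. sc (d j) (g j)) = (\<Sum>j\<in>?F. sc (if j \<in> F then d j else 0) (g j))"
    if "F \<subseteq> ?F" for F d
  proof -
    have "(\<Sum>j\<in>?F. sc (if j \<in> F then d j else 0) (g j))
        = (\<Sum>j\<in>?F. if j \<in> F then sc (d j) (g j) else 0)"
      by (intro sum.cong) auto
    also have "\<dots> = (\<Sum>j\<in>?F \<inter> F. sc (d j) (g j))"
      using F1(1) F2(1) by (simp add: sum.inter_restrict)
    finally show ?thesis
      using that by (simp add: Int_absorb1)
  qed
  have "u + v = (\<Sum>j\<in>?F. sc (c j) (g j))"
    unfolding F1(3) F2(3) extend[of F1 c1, OF Un_upper1] extend[of F2 c2, OF Un_upper2] c_def
    by (simp only: sc_add_left sum.distrib)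
  moreover have "finite ?F" "?F \<subseteq> J"
    using F1(1,2) F2(1,2) by auto
  ultimately show ?thesis
    unfolding hspan_iff by blast
qed

lemma hspan_sc:
  assumes "v \<in> hspan g J"
  shows "sc a v \<in> hspan g J"
proof -
  obtain F c where F: "finite F" "F \<subseteq> J" "v = (\<Sum>j\<in>F. sc (c j) (g j))"
    using assms by (auto simp: hspan_iff)
  define c' where "c' j = a * c j" for j
  have "sc a v = (\<Sum>j\<in>F. sc (c' j) (g j))"
    using F(3) by (simp add: sc_sum sc_sc c'_def)
  with F(1,2) show ?thesis
    unfolding hspan_iff by blast
qed

lemma hspan_uminus: "v \<in> hspan g J \<Longrightarrow> - v \<in> hspan g J"
  using hspan_sc[of v g J "-1"] by simp

lemma hspan_diff: "u \<in> hspan g J \<Longrightarrow> v \<in> hspan g J \<Longrightarrow> u - v \<in> hspan g J"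
  using hspan_add[of u g J "- v"] hspan_uminus[of v g J] by simp

lemma hspan_sum: "(\<And>i. i \<in> I \<Longrightarrow> f i \<in> hspan g J) \<Longrightarrow> (\<Sum>i\<in>I. f i) \<in> hspan g J"
  by (induction I rule: infinite_finite_induct) (auto intro: hspan_zero hspan_add)

lemma hspan_closed_hlinear:
  assumes L: "hlinear L"
    and fin: "\<And>j. j \<in> J \<Longrightarrow> finite (hsupp (g j))"
    and closed: "\<And>j. j \<in> J \<Longrightarrow> L (g j) \<in> hspan g J"
    and v: "v \<in> hspan g J"
  shows "L v \<in> hspan g J"
proof -
  obtain F c where F: "finite F" "F \<subseteq> J" "v = (\<Sum>j\<in>F. sc (c j) (g j))"
    using v by (auto simp: hspan_iff)
  have "L v = (\<Sum>j\<in>F. sc (c j) (L (g j)))"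
    unfolding F(3) using F(2) fin
    by (subst hlinear_sum[OF L]) (auto intro!: sum.cong hlinear_sc[OF L])
  also have "\<dots> \<in> hspan g J"
    using F(2) by (auto intro!: hspan_sum hspan_sc closed)
  finally show ?thesis .
qed

lemma hideal_subset_hspan:
  assumes x: "x \<in> hspan g J"
    and fin: "\<And>j. j \<in> J \<Longrightarrow> finite (hsupp (g j))"
    and closed: "\<And>b j. hvalid b \<Longrightarrow> j \<in> J \<Longrightarrow> hmult (ev b) (g j) \<in> hspan g J"
  shows "hideal x \<subseteq> hspan g J"
proof
  fix v
  assume "v \<in> hideal x"
  then show "v \<in> hspan g J"
  proof induction
    case gen
    show ?case by (rule x)
  next
    case zero
    show ?case by (rule hspan_zero)
  next
    case (add u v)
    from add.IH show ?case by (rule hspan_add)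
  next
    case (smult v c)
    from smult.IH show ?case by (rule hspan_sc)
  next
    case (mult y v)
    have "hmult (ev b) v \<in> hspan g J" if "b \<in> hsupp y" for b
      using mult.hyps(1) that
      by (intro hspan_closed_hlinear[OF hlinear_hmult fin closed mult.IH]) (auto simp: Hcarrier_def)
    then show ?case
      unfolding hmult_eq_sum_hmult_ev[of y] by (intro hspan_sum hspan_sc)
  qed
qed

lemma hideal_sum: "(\<And>i. i \<in> I \<Longrightarrow> f i \<in> hideal x) \<Longrightarrow> (\<Sum>i\<in>I. f i) \<in> hideal x"
  by (induction I rule: infinite_finite_induct) (auto intro: hideal.zero hideal.add)

lemma hspan_subset_hideal:
  assumes "\<And>j. j \<in> J \<Longrightarrow> g j \<in> hideal x"
  shows "hspan g J \<subseteq> hideal x"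
  using assms by (force simp: hspan_iff intro!: hideal_sum hideal.smult)

lemma hlin_indep_triangular:
  fixes rank :: "'i \<Rightarrow> 'r::linorder" and pt :: "'i \<Rightarrow> hidx"
  assumes lead: "\<And>j. j \<in> J \<Longrightarrow> g j (pt j) \<noteq> 0"
    and below: "\<And>j j'. j \<in> J \<Longrightarrow> j' \<in> J \<Longrightarrow> j' \<noteq> j \<Longrightarrow> rank j' \<le> rank j
      \<Longrightarrow> g j' (pt j) = 0"
  shows "hlin_indep g J"
  unfolding hlin_indep_def
proof (intro allI impI ballI)
  fix F c j
  assume F: "finite F" "F \<subseteq> J" and zero: "(\<lambda>b. \<Sum>j\<in>F. c j * g j b) = 0" and "j \<in> F"
  show "c j = 0"
  proof (rule ccontr)
    assume "c j \<noteq> 0"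
    define S where "S = {j \<in> F. c j \<noteq> 0}"
    have "finite S" "S \<noteq> {}"
      using F \<open>j \<in> F\<close> \<open>c j \<noteq> 0\<close> by (auto simp: S_def)
    then have "Max (rank ` S) \<in> rank ` S"
      by simp
    then obtain j0 where j0: "j0 \<in> S" "rank j0 = Max (rank ` S)"
      by (metis imageE)
    have vanish: "c j' * g j' (pt j0) = 0" if "j' \<in> F - {j0}" for j'
    proof (cases "c j' = 0")
      case False
      then have "j' \<in> S"
        using that by (simp add: S_def)
      then have "rank j' \<le> rank j0"
        unfolding j0(2) using \<open>finite S\<close> by simp
      then have "g j' (pt j0) = 0"
        using that j0(1) F(2) by (intro below) (auto simp: S_def)
      then show ?thesis
        by simp
    qed simp
    have "0 = (\<Sum>j\<in>F. c j * g j (pt j0))"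
      using fun_cong[OF zero, of "pt j0"] by simp
    also have "\<dots> = c j0 * g j0 (pt j0) + (\<Sum>j\<in>F - {j0}. c j * g j (pt j0))"
      using F(1) j0(1) by (intro sum.remove) (auto simp: S_def)
    also have "\<dots> = c j0 * g j0 (pt j0)"
      using vanish by (simp add: sum.neutral)
    finally show False
      using j0(1) F(2) lead[of j0] by (auto simp: S_def)
  qed
qed

section \<open>The elements p indexed by integers, and the action of s\<close>

lemma mod3_cases:
  fixes c :: int
  obtains "c mod 3 = 0" | "c mod 3 = 1" | "c mod 3 = 2"
  by linarith

definition residue_balanced :: "(int \<Rightarrow> 'b::ab_group_add) \<Rightarrow> bool" where
  "residue_balanced f \<longleftrightarrow> (\<forall>c. f c + f (c + 1) + f (c + 2) = 0)"

(* A balanced function of the residue is determined by its values at c \<equiv> 1, 2, where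
   p_{c,n} is a basis vector rather than p_{0,n} = - p_{1,n} - p_{2,n}. *)
lemma residue_balanced_eq:
  assumes F: "residue_balanced F" and G: "residue_balanced G"
    and nonzero: "\<And>c. c mod 3 \<noteq> 0 \<Longrightarrow> F c = G c"
  shows "F c = G c"
proof (cases "c mod 3 = 0")
  case True
  then have "(c + 1) mod 3 \<noteq> 0" "(c + 2) mod 3 \<noteq> 0"
    by presburger+
  then have "F (c + 1) = G (c + 1)" "F (c + 2) = G (c + 2)"
    using nonzero by blast+
  moreover have "F c = - (F (c + 1) + F (c + 2))" "G c = - (G (c + 1) + G (c + 2))"
    using F G unfolding residue_balanced_def by (simp_all only: eq_neg_iff_add_eq_0 add.assoc)
  ultimately show ?thesis
    by simp
qed (rule nonzero)

lemma residue_balanced_diff: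
  assumes "residue_balanced f" "residue_balanced g"
  shows "residue_balanced (\<lambda>c. f c - g c)"
  unfolding residue_balanced_def
proof
  fix c
  have "f c - g c + (f (c + 1) - g (c + 1)) + (f (c + 2) - g (c + 2))
      = (f c + f (c + 1) + f (c + 2)) - (g c + g (c + 1) + g (c + 2))"
    by (simp add: algebra_simps)
  also have "\<dots> = 0"
    using assms by (simp add: residue_balanced_def)
  finally show "f c - g c + (f (c + 1) - g (c + 1)) + (f (c + 2) - g (c + 2)) = 0" .
qed

lemma residue_balanced_shift: "residue_balanced f \<Longrightarrow> residue_balanced (\<lambda>c. f (c + a))"
  unfolding residue_balanced_def by (metis add.commute add.left_commute)

lemma residue_balanced_reflect:
  assumes "residue_balanced f"
  shows "residue_balanced (\<lambda>c. f (- (a + c)))"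
  unfolding residue_balanced_def
proof
  fix c
  have "- (a + c + 2) + 1 = - (a + (c + 1))" "- (a + c + 2) + 2 = - (a + c)"
    by simp_all
  then show "f (- (a + c)) + f (- (a + (c + 1))) + f (- (a + (c + 2))) = 0"
    using assms[unfolded residue_balanced_def, rule_format, of "- (a + c + 2)"]
    by (simp add: ac_simps)
qed

lemma residue_balanced_sc: "residue_balanced f \<Longrightarrow> residue_balanced (\<lambda>c. sc a (f c))"
  by (simp add: residue_balanced_def flip: sc_add)

lemma residue_balanced_hlinear:
  assumes L: "hlinear L" and fin: "\<And>c. finite (hsupp (f c))" and f: "residue_balanced f"
  shows "residue_balanced (\<lambda>c. L (f c))"
  unfolding residue_balanced_def
proof
  fix c
  have "L (f c) + L (f (c + 1)) + L (f (c + 2)) = L (f c + f (c + 1) + f (c + 2))"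
    using fin by (simp add: hlinear_add[OF L] finite_hsupp_add)
  then show "L (f c) + L (f (c + 1)) + L (f (c + 2)) = 0"
    using f by (simp add: residue_balanced_def hlinear_zero[OF L])
qed

lemma pv_mod_eq: "c mod 3 = c' mod 3 \<Longrightarrow> pv c = pv c'"
  by (simp add: fun_eq_iff pv_def)

lemma residue_balanced_pv: "residue_balanced (\<lambda>c. pv c m)"
  unfolding residue_balanced_def
proof
  fix c
  show "pv c m + pv (c + 1) m + pv (c + 2) m = 0"
  proof (cases c rule: mod3_cases)
    case 1
    then have "(c + 1) mod 3 = 1" "(c + 2) mod 3 = 2" by presburger+
    with 1 show ?thesis by (simp add: pv_def)
  next
    case 2
    then have "(c + 1) mod 3 = 2" "(c + 2) mod 3 = 0" by presburger+
    with 2 show ?thesis by (simp add: pv_def)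
  next
    case 3
    then have "(c + 1) mod 3 = 0" "(c + 2) mod 3 = 1" by presburger+
    with 3 show ?thesis by (simp add: pv_def)
  qed
qed

lemma pv_eq_ev: "c mod 3 = rr r mod 3 \<Longrightarrow> 0 < m \<Longrightarrow> 3 dvd m \<Longrightarrow> pv c m = ev (P r m)"
  by (cases r) (simp_all add: pv_def)

lemma residue_nonzero_rr:
  fixes c :: int
  assumes "c mod 3 \<noteq> 0"
  obtains r where "c mod 3 = rr r mod 3"
  using assms that[of "c mod 3 = 1"] by (cases "c mod 3 = 1") auto

lemma mod3_neg_add_cong: "(c::int) mod 3 = c' mod 3 \<Longrightarrow> (- (a + c')) mod 3 = (- (a + c)) mod 3"
  by presburger

lemma finite_hsupp_pv [simp]: "finite (hsupp (pv c m))"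
proof -
  have "hsupp (pv c m) \<subseteq> {P True m, P False m}"
    by (auto simp: hsupp_def pv_def ev_def split: if_splits)
  then show ?thesis
    by (rule finite_subset) simp
qed

lemma tau0_pv: "tau0 (pv c m) = - pv (- c) m"
proof (cases c rule: mod3_cases)
  case 1
  then have "(- c) mod 3 = 0" by presburger
  with 1 show ?thesis by (simp add: pv_def fun_eq_iff tau0_def ev_def split: hidx.split)
next
  case 2
  then have "(- c) mod 3 = 2" by presburger
  with 2 show ?thesis by (simp add: pv_def fun_eq_iff tau0_def ev_def split: hidx.split)
next
  case 3
  then have "(- c) mod 3 = 1" by presburger
  with 3 show ?thesis by (simp add: pv_def fun_eq_iff tau0_def ev_def split: hidx.split)
qed

lemma zv_mod_eq: "c mod 3 = c' mod 3 \<Longrightarrow> zv c = zv c'"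
proof -
  assume "c mod 3 = c' mod 3"
  then have "(c + 1) mod 3 = (c' + 1) mod 3" "(c - 1) mod 3 = (c' - 1) mod 3"
    by presburger+
  then show ?thesis
    by (simp add: fun_eq_iff zv_def pv_mod_eq[of "c + 1" "c' + 1"] pv_mod_eq[of "c - 1" "c' - 1"])
qed

(* Indexing p_{c,|n|} by an integer n, evenly, lets (H5) and (H6) be written with n - m and
   n + m in place of |n - m| and n + m. *)
definition pint :: "int \<Rightarrow> int \<Rightarrow> 'a::field hvec" where
  "pint c n = pv c (nat \<bar>n\<bar>)"

definition zint :: "int \<Rightarrow> int \<Rightarrow> 'a::field hvec" where
  "zint c n = pint (c + 1) n - pint (c - 1) n"

lemma pint_minus [simp]: "pint c (- n) = pint c n"
  and zint_minus [simp]: "zint c (- n) = zint c n"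
  by (simp_all add: pint_def zint_def)

lemma pint_zero [simp]: "pint c 0 = 0"
  and zint_zero [simp]: "zint c 0 = 0"
  by (simp_all add: pint_def zint_def pv_def)

lemma finite_hsupp_pint [simp]: "finite (hsupp (pint c n))"
  and finite_hsupp_zint [simp]: "finite (hsupp (zint c n))"
  by (auto simp: pint_def zint_def)

lemma pint_not_dvd: "\<not> 3 dvd n \<Longrightarrow> pint c n = 0"
  by (simp add: pint_def pv_def)

lemma pint_mod_eq: "c mod 3 = c' mod 3 \<Longrightarrow> pint c = pint c'"
  by (simp add: fun_eq_iff pint_def pv_mod_eq[of c c'])

lemma zint_eq_zv: "zint c n = zv c (nat \<bar>n\<bar>)"
  by (simp add: zint_def zv_def pint_def)

lemma tau0_pint: "tau0 (pint c n) = - pint (- c) n"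
  by (simp add: pint_def tau0_pv)

lemma pint_rr_apply:
  "0 < m \<Longrightarrow> 3 dvd m \<Longrightarrow> pint (rr r) n (P r' m) = (if r' = r \<and> int m = \<bar>n\<bar> then 1 else 0)"
  by (cases r; cases r') (auto simp: pint_def pv_def ev_def)

lemma residue_balanced_pint: "residue_balanced (\<lambda>c. pint c n)"
  unfolding pint_def by (rule residue_balanced_pv)

lemma residue_balanced_zint: "residue_balanced (\<lambda>c. zint c n)"
proof -
  have "residue_balanced (\<lambda>c. pint (c + 1) n - pint (c + - 1) n)"
    by (intro residue_balanced_diff residue_balanced_shift[of "\<lambda>c. pint c n"] residue_balanced_pint)
  then show ?thesis
    by (simp add: zint_def)
qed

(* Also in characteristic 2, where both sides are 0 by the convention x / 0 = 0. *)
lemma three_quarters: "(3 / 4 :: 'a::field) = 2 * (3 / 8)"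
proof (cases "(2::'a) = 0")
  case True
  then have "(4::'a) = 0" "(8::'a) = 0"
    by (metis mult_2 mult_zero_left numeral_Bit0 numeral_times_numeral)+
  then show ?thesis
    by simp
next
  case False
  then have "(4::'a) \<noteq> 0" "(8::'a) \<noteq> 0"
    using power_not_zero[OF False, of 2] power_not_zero[OF False, of 3] by simp_all
  with False show ?thesis
    by (simp add: field_simps)
qed

(* sprod q i n is s_i q_n by (H4) and (H5) when q n is s_|n| or p_{r,|n|}. *)
definition sprod :: "(int \<Rightarrow> 'a::field hvec) \<Rightarrow> int \<Rightarrow> int \<Rightarrow> 'a hvec" where
  "sprod q i n = sc (3/4) (q i + q n) - sc (3/8) (q (i - n) + q (i + n))"

(* The identities below only use 3/4 = 2 * 3/8; they are proved with 3/8 replaced by an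
   opaque y, which keeps the simplifier from normalising the fractions. *)
lemma sprod_eq_coeff:
  "sprod q i n = (\<lambda>d. 2 * (3/8) * (q i d + q n d) - 3/8 * (q (i - n) d + q (i + n) d))"
  unfolding sprod_def three_quarters by (simp add: fun_eq_iff)

lemma sprod_add: "sprod (\<lambda>m. q m + q' m) i n = sprod q i n + sprod q' i n"
  and sprod_diff: "sprod (\<lambda>m. q m - q' m) i n = sprod q i n - sprod q' i n"
  and sprod_uminus: "sprod (\<lambda>m. - q m) i n = - sprod q i n"
  and sprod_sc: "sprod (\<lambda>m. sc a (q m)) i n = sc a (sprod q i n)"
  by (simp_all add: sprod_def sc_add sc_diff sc_minus sc_commute algebra_simps)

lemma sprod_sum: "sprod (\<lambda>m. \<Sum>j\<in>F. f j m) i n = (\<Sum>j\<in>F. sprod (f j) i n)"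
  by (simp add: sprod_def sc_add sc_sum sum.distrib sum_subtractf)

lemma sprod_cong:
  "q i = q' i \<Longrightarrow> q n = q' n \<Longrightarrow> q (i - n) = q' (i - n) \<Longrightarrow> q (i + n) = q' (i + n)
    \<Longrightarrow> sprod q i n = sprod q' i n"
  by (simp add: sprod_def)

lemma finite_hsupp_sprod [intro]: "(\<And>m. finite (hsupp (q m))) \<Longrightarrow> finite (hsupp (sprod q i n))"
  by (auto simp: sprod_def)

lemma hlinear_sprod:
  assumes "hlinear L" "\<And>m. finite (hsupp (q m))"
  shows "L (sprod q i n) = sprod (\<lambda>m. L (q m)) i n"
  unfolding sprod_def
  by (simp only: assms hlinear_diff[OF assms(1)] hlinear_sc[OF assms(1)] hlinear_add[OF assms(1)]
      finite_hsupp_add finite_hsupp_sc)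

lemma residue_balanced_sprod:
  assumes "\<And>m. residue_balanced (\<lambda>c. q c m)"
  shows "residue_balanced (\<lambda>c. sprod (q c) i n)"
  using assms sprod_add[of "\<lambda>m. q c m + q (c + 1) m" "q (c + 2)" i n for c]
    sprod_add[of "q c" "q (c + 1)" i n for c]
  by (simp add: residue_balanced_def sprod_def)

context
  fixes q :: "int \<Rightarrow> 'a::field hvec"
  assumes even: "\<And>m. q (- m) = q m"
begin

lemma sprod_minus_left: "sprod q (- i) n = sprod q i n"
  using even[of "i + n"] even[of "i - n"] even[of i] by (simp add: sprod_def algebra_simps)

lemma sprod_minus_right: "sprod q i (- n) = sprod q i n"
  using even[of n] by (simp add: sprod_def algebra_simps)

lemma sprod_abs_right: "sprod q i n = sprod q i \<bar>n\<bar>"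
  by (cases "n \<ge> 0") (simp_all add: sprod_minus_right)

lemma sprod_zero_right:
  assumes "q 0 = 0"
  shows "sprod q i 0 = 0"
proof -
  define y :: 'a where "y = 3/8"
  show ?thesis
    using assms unfolding sprod_eq_coeff y_def[symmetric] by (simp add: fun_eq_iff algebra_simps)
qed

lemma sprod_zero_left:
  assumes "q 0 = 0"
  shows "sprod q 0 n = 0"
proof -
  define y :: 'a where "y = 3/8"
  show ?thesis
    using assms even[of n] unfolding sprod_eq_coeff y_def[symmetric]
    by (simp add: fun_eq_iff algebra_simps)
qed

(* s_j (s_i p_n) = (s_i s_j) p_n: the left side is s_j applied to (H5) for s_i p_n, the right
   side is (H4) for s_i s_j. *)
lemma sprod_assoc: "sprod (\<lambda>m. sprod q j m) i n = sprod (\<lambda>a. sprod q a n) i j"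
proof -
  define y :: 'a where "y = 3/8"
  have "q (j - i) = q (i - j)" "q (j - (i - n)) = q (i - j - n)" "q (j - (i + n)) = q (i - j + n)"
    using even[of "i - j"] even[of "i - j - n"] even[of "i - j + n"] by (simp_all add: algebra_simps)
  moreover have "q (j + (i - n)) = q (i + j - n)" "q (j + (i + n)) = q (i + j + n)"
    "q (j + i) = q (i + j)"
    by (simp_all add: algebra_simps)
  ultimately show ?thesis
    unfolding sprod_eq_coeff y_def[symmetric] by (simp add: fun_eq_iff algebra_simps)
qed

end

section \<open>Products with a single p\<close>

lemma hmult_A_pint:
  "hmult (ev (A a)) (pint c n :: 'a::field hvec) = sc (3/2) (pint c n) - pint (- (a + c)) n"
proof (cases "3 dvd n \<and> n \<noteq> 0")
  case False
  then show ?thesis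
    by (auto simp: pint_not_dvd hlinear_zero[OF hlinear_hmult])
next
  case True
  define m where "m = nat \<bar>n\<bar>"
  have m: "0 < m" "3 dvd m"
    using True by (auto simp: m_def)
  show ?thesis
  proof (rule residue_balanced_eq[where F = "\<lambda>c. hmult (ev (A a)) (pint c n)"
        and G = "\<lambda>c. sc (3/2) (pint c n) - pint (- (a + c)) n"])
    show "residue_balanced (\<lambda>c. hmult (ev (A a)) (pint c n :: 'a hvec))"
      by (rule residue_balanced_hlinear[OF hlinear_hmult finite_hsupp_pint residue_balanced_pint])
    show "residue_balanced (\<lambda>c. sc (3/2) (pint c n) - pint (- (a + c)) n :: 'a hvec)"
      by (rule residue_balanced_diff[OF residue_balanced_sc residue_balanced_reflect])
        (rule residue_balanced_pint)+
    fix c :: int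
    assume "c mod 3 \<noteq> 0"
    then obtain r where r: "c mod 3 = rr r mod 3"
      by (rule residue_nonzero_rr)
    have cong: "(- (a + rr r)) mod 3 = (- (a + c)) mod 3"
      using r by (rule mod3_neg_add_cong)
    show "hmult (ev (A a)) (pint c n) = sc (3/2) (pint c n) - pint (- (a + c)) n"
      unfolding pint_def m_def[symmetric]
      by (simp only: pv_eq_ev[OF r m] pv_eq_ev[OF refl m] hmult_ev_ev bprod.simps prodAP_def
          pv_mod_eq[OF cong])
  qed
qed

lemma hmult_S_pint:
  assumes "3 dvd n"
  shows "hmult (ev (S j)) (pint c n :: 'a::field hvec) = sprod (pint c) (int j) n"
proof (cases "n = 0")
  case True
  then show ?thesis
    by (simp add: hlinear_zero[OF hlinear_hmult] sprod_zero_right)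
next
  case False
  define m where "m = nat \<bar>n\<bar>"
  have m: "0 < m" "3 dvd m"
    using False assms by (auto simp: m_def)
  have abs_n: "\<bar>n\<bar> = int m"
    by (simp add: m_def)
  show ?thesis
    unfolding sprod_abs_right[where q = "pint c" and n = n, OF pint_minus] abs_n
  proof (rule residue_balanced_eq[where F = "\<lambda>c. hmult (ev (S j)) (pint c n)"
        and G = "\<lambda>c. sprod (pint c) (int j) (int m)"])
    show "residue_balanced (\<lambda>c. hmult (ev (S j)) (pint c n :: 'a hvec))"
      by (rule residue_balanced_hlinear[OF hlinear_hmult finite_hsupp_pint residue_balanced_pint])
    show "residue_balanced (\<lambda>c. sprod (pint c) (int j) (int m) :: 'a hvec)"
      by (rule residue_balanced_sprod[OF residue_balanced_pint])
    fix c :: int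
    assume "c mod 3 \<noteq> 0"
    then obtain r where r: "c mod 3 = rr r mod 3"
      by (rule residue_nonzero_rr)
    have "nat \<bar>int j + int m\<bar> = j + m"
      by simp
    then show "hmult (ev (S j)) (pint c n :: 'a hvec) = sprod (pint c) (int j) (int m)"
      unfolding pint_def m_def[symmetric]
      by (simp add: sprod_def pint_def pv_eq_ev[OF r m] hmult_ev_ev prodSP_def
          pv_mod_eq[of "rr r" c] r)
  qed
qed

lemma third_of_fraction: "(3::'a::field) \<noteq> 0 \<Longrightarrow> 1/3 * (3/x) = 1/(x::'a)"
  by (cases "x = 0") (simp_all add: field_simps)

lemma hmult_P_pint:
  assumes three: "(3::'a::field) \<noteq> 0" and "3 dvd n"
  shows "hmult (ev (P t h)) (pint c n :: 'a hvec) = sc (1/3) (sprod (zint (- (rr t + c))) (int h) n)"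
proof (cases "n = 0")
  case True
  then show ?thesis
    by (simp add: hlinear_zero[OF hlinear_hmult] sprod_zero_right)
next
  case False
  define m where "m = nat \<bar>n\<bar>"
  have m: "0 < m" "3 dvd m"
    using False assms by (auto simp: m_def)
  have abs_n: "\<bar>n\<bar> = int m"
    by (simp add: m_def)
  show ?thesis
    unfolding sprod_abs_right[where q = "zint (- (rr t + c))" and n = n, OF zint_minus] abs_n
  proof (rule residue_balanced_eq[where F = "\<lambda>c. hmult (ev (P t h)) (pint c n)"
        and G = "\<lambda>c. sc (1/3) (sprod (zint (- (rr t + c))) (int h) (int m))"])
    show "residue_balanced (\<lambda>c. hmult (ev (P t h)) (pint c n :: 'a hvec))"
      by (rule residue_balanced_hlinear[OF hlinear_hmult finite_hsupp_pint residue_balanced_pint])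
    show "residue_balanced (\<lambda>c. sc (1/3) (sprod (zint (- (rr t + c))) (int h) (int m)) :: 'a hvec)"
      by (rule residue_balanced_sc[OF residue_balanced_sprod[OF residue_balanced_reflect]])
        (rule residue_balanced_zint)
    fix c :: int
    assume "c mod 3 \<noteq> 0"
    then obtain r where r: "c mod 3 = rr r mod 3"
      by (rule residue_nonzero_rr)
    have cong: "(- (rr t + rr r)) mod 3 = (- (rr t + c)) mod 3"
      using r by (rule mod3_neg_add_cong)
    have "nat \<bar>int h + int m\<bar> = h + m"
      by simp
    then show "hmult (ev (P t h)) (pint c n :: 'a hvec)
        = sc (1/3) (sprod (zint (- (rr t + c))) (int h) (int m))"
      unfolding pint_def m_def[symmetric] pv_eq_ev[OF r m] hmult_ev_ev bprod.simps
        zv_mod_eq[OF cong] sprod_def sc_diff sc_sc third_of_fraction[OF three] zint_eq_zv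
      by simp
  qed
qed

section \<open>The elements x_c and s_i x_c\<close>

context
  fixes \<beta> :: "nat \<Rightarrow> 'a::field" and k :: nat
begin

definition wsum :: "(int \<Rightarrow> 'a hvec) \<Rightarrow> 'a hvec" where
  "wsum f = (\<Sum>j\<in>{1..k}. sc (\<beta> (3 * j)) (f (int (3 * j))))"

lemma finite_hsupp_wsum [intro]: "(\<And>n. finite (hsupp (f n))) \<Longrightarrow> finite (hsupp (wsum f))"
  by (auto simp: wsum_def)

lemma hlinear_wsum:
  assumes "hlinear L" "\<And>n. finite (hsupp (f n))"
  shows "L (wsum f) = wsum (\<lambda>n. L (f n))"
  unfolding wsum_def using assms
  by (simp add: hlinear_sum[OF assms(1)] hlinear_sc[OF assms(1)] finite_hsupp_sc)

lemma wsum_cong: "(\<And>n. 3 dvd n \<Longrightarrow> f n = g n) \<Longrightarrow> wsum f = wsum g"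
  unfolding wsum_def by (intro sum.cong refl) simp

lemma wsum_add: "wsum (\<lambda>n. f n + g n) = wsum f + wsum g"
  and wsum_diff: "wsum (\<lambda>n. f n - g n) = wsum f - wsum g"
  and wsum_uminus: "wsum (\<lambda>n. - f n) = - wsum f"
  and wsum_sc: "wsum (\<lambda>n. sc a (f n)) = sc a (wsum f)"
  by (simp_all add: wsum_def sc_add sc_diff sc_minus sc_commute sc_sum sum.distrib sum_subtractf
      sum_negf)

lemma wsum_zero [simp]: "wsum (\<lambda>n. 0) = 0"
  by (simp add: wsum_def)

lemma wsum_sprod: "wsum (\<lambda>n. sprod (\<lambda>a. G a n) i j) = sprod (\<lambda>a. wsum (G a)) i j"
  by (simp add: wsum_def sprod_sum sprod_sc)

lemma residue_balanced_wsum: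
  assumes "\<And>n. residue_balanced (\<lambda>c. f c n)"
  shows "residue_balanced (\<lambda>c. wsum (f c))"
  using assms by (simp add: residue_balanced_def flip: wsum_add)

(* xres c is x_c, so x = xres 1; sxres c i is s_i x_c for i > 0. *)
definition xres :: "int \<Rightarrow> 'a hvec" where
  "xres c = wsum (pint c)"

definition sxres :: "int \<Rightarrow> int \<Rightarrow> 'a hvec" where
  "sxres c i = wsum (sprod (pint c) i)"

lemma finite_hsupp_xres [simp]: "finite (hsupp (xres c))"
  and finite_hsupp_sxres [simp]: "finite (hsupp (sxres c i))"
  by (auto simp: xres_def sxres_def intro!: finite_hsupp_wsum finite_hsupp_sprod)

lemma xres_mod_eq: "c mod 3 = c' mod 3 \<Longrightarrow> xres c = xres c'"
  by (simp add: xres_def pint_mod_eq[of c c'])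

lemma sxres_mod_eq: "c mod 3 = c' mod 3 \<Longrightarrow> sxres c = sxres c'"
  by (simp add: fun_eq_iff sxres_def pint_mod_eq[of c c'])

lemma residue_balanced_xres: "residue_balanced xres"
  and residue_balanced_sxres: "residue_balanced (\<lambda>c. sxres c i)"
  unfolding xres_def sxres_def
  by (rule residue_balanced_wsum residue_balanced_sprod residue_balanced_pint)+

lemma tau0_xres: "tau0 (xres c) = - xres (- c)"
  by (simp add: xres_def hlinear_wsum[OF hlinear_tau0] tau0_pint wsum_uminus)

lemma tau0_sxres: "tau0 (sxres c i) = - sxres (- c) i"
  unfolding sxres_def hlinear_wsum[OF hlinear_tau0 finite_hsupp_sprod[OF finite_hsupp_pint]]
  by (simp add: hlinear_sprod[OF hlinear_tau0] tau0_pint sprod_uminus wsum_uminus)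

lemma sxres_minus: "sxres c (- i) = sxres c i"
  unfolding sxres_def by (rule arg_cong[where f = wsum]) (simp add: fun_eq_iff sprod_minus_left)

lemma sxres_zero: "sxres c 0 = 0"
proof -
  have vanish: "sprod (pint c) 0 = (\<lambda>n. 0)"
    by (simp add: fun_eq_iff sprod_zero_left)
  show ?thesis
    unfolding sxres_def vanish by simp
qed

lemma sxres_not_dvd:
  assumes "\<not> 3 dvd i"
  shows "sxres c i = sc (3/4) (xres c)"
proof -
  have "sprod (pint c) i n = sc (3/4) (pint c n :: 'a hvec)" if "3 dvd n" for n
  proof -
    have "\<not> 3 dvd i - n" "\<not> 3 dvd i + n"
      using assms that by presburger+
    with assms show ?thesis
      by (simp add: sprod_def pint_not_dvd)
  qed
  then have "sxres c i = wsum (\<lambda>n. sc (3/4) (pint c n))"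
    unfolding sxres_def by (rule wsum_cong)
  then show ?thesis
    by (simp add: xres_def wsum_sc)
qed

lemma hmult_A_xres: "hmult (ev (A a)) (xres c) = sc (3/2) (xres c) - xres (- (a + c))"
  by (simp add: xres_def hlinear_wsum[OF hlinear_hmult] hmult_A_pint wsum_diff wsum_sc)

lemma hmult_S_xres: "hmult (ev (S j)) (xres c) = sxres c (int j)"
  unfolding xres_def sxres_def hlinear_wsum[OF hlinear_hmult finite_hsupp_pint]
  by (rule wsum_cong) (rule hmult_S_pint)

lemma hmult_P_xres:
  assumes "(3::'a) \<noteq> 0"
  shows "hmult (ev (P t h)) (xres c) =
    sc (1/3) (sxres (- (rr t + c) + 1) (int h) - sxres (- (rr t + c) - 1) (int h))"
proof -
  have "hmult (ev (P t h)) (pint c n :: 'a hvec) = sc (1/3)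
      (sprod (pint (- (rr t + c) + 1)) (int h) n - sprod (pint (- (rr t + c) - 1)) (int h) n)"
    if "3 dvd n" for n
    using hmult_P_pint[OF assms that] by (simp add: zint_def[abs_def] sprod_diff)
  then have "hmult (ev (P t h)) (xres c) = wsum (\<lambda>n. sc (1/3)
      (sprod (pint (- (rr t + c) + 1)) (int h) n - sprod (pint (- (rr t + c) - 1)) (int h) n))"
    unfolding xres_def hlinear_wsum[OF hlinear_hmult finite_hsupp_pint] by (rule wsum_cong)
  then show ?thesis
    by (simp add: sxres_def wsum_sc wsum_diff)
qed

lemma hmult_A_sxres: "hmult (ev (A a)) (sxres c i) = sc (3/2) (sxres c i) - sxres (- (a + c)) i"
  unfolding sxres_def hlinear_wsum[OF hlinear_hmult finite_hsupp_sprod[OF finite_hsupp_pint]]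
    hlinear_sprod[OF hlinear_hmult finite_hsupp_pint] hmult_A_pint
  by (simp add: sprod_diff sprod_sc wsum_diff wsum_sc)

lemma hmult_S_sxres:
  assumes "3 dvd i"
  shows "hmult (ev (S j)) (sxres c i) = sprod (sxres c) i (int j)"
proof -
  have "sprod (\<lambda>m. hmult (ev (S j)) (pint c m :: 'a hvec)) i n
      = sprod (\<lambda>a. sprod (pint c) a n) i (int j)"
    if "3 dvd n" for n
  proof -
    have "sprod (\<lambda>m. hmult (ev (S j)) (pint c m :: 'a hvec)) i n
        = sprod (\<lambda>m. sprod (pint c) (int j) m) i n"
      using assms that by (intro sprod_cong) (simp_all add: hmult_S_pint)
    then show ?thesis
      by (simp add: sprod_assoc)
  qed
  then have "hmult (ev (S j)) (sxres c i) = wsum (\<lambda>n. sprod (\<lambda>a. sprod (pint c) a n) i (int j))"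
    unfolding sxres_def hlinear_wsum[OF hlinear_hmult finite_hsupp_sprod[OF finite_hsupp_pint]]
      hlinear_sprod[OF hlinear_hmult finite_hsupp_pint]
    by (rule wsum_cong)
  then show ?thesis
    by (simp add: wsum_sprod sxres_def[abs_def])
qed

lemma hmult_P_sxres:
  assumes three: "(3::'a) \<noteq> 0" and "3 dvd i"
  shows "hmult (ev (P t h)) (sxres c i) =
    sc (1/3) (sprod (\<lambda>a. sxres (- (rr t + c) + 1) a - sxres (- (rr t + c) - 1) a) i (int h))"
proof -
  define e where "e = - (rr t + c)"
  have "sprod (\<lambda>m. hmult (ev (P t h)) (pint c m)) i n
      = sc (1/3) (sprod (\<lambda>a. sprod (zint e) a n) i (int h) :: 'a hvec)"
    if "3 dvd n" for n
  proof -
    have "sprod (\<lambda>m. hmult (ev (P t h)) (pint c m :: 'a hvec)) i n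
        = sprod (\<lambda>m. sc (1/3) (sprod (zint e) (int h) m)) i n"
      using assms that by (intro sprod_cong) (simp_all add: hmult_P_pint e_def)
    then show ?thesis
      by (simp add: sprod_sc sprod_assoc)
  qed
  then have "hmult (ev (P t h)) (sxres c i)
      = wsum (\<lambda>n. sc (1/3) (sprod (\<lambda>a. sprod (zint e) a n) i (int h)))"
    unfolding sxres_def hlinear_wsum[OF hlinear_hmult finite_hsupp_sprod[OF finite_hsupp_pint]]
      hlinear_sprod[OF hlinear_hmult finite_hsupp_pint]
    by (rule wsum_cong)
  moreover have "wsum (\<lambda>n. sprod (zint e) a n) = sxres (e + 1) a - sxres (e - 1) a" for a
    by (simp add: sxres_def zint_def[abs_def] sprod_diff wsum_diff)
  ultimately show ?thesis
    by (simp add: wsum_sc wsum_sprod e_def)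
qed

end

section \<open>The basis of the ideal\<close>

definition ideal_basis :: "'a::field hvec \<Rightarrow> nat \<times> bool \<Rightarrow> 'a hvec" where
  "ideal_basis x = (\<lambda>(i, t). (if t then tau0 else id) (if i = 0 then x else hmult (sv i) x))"

lemma ideal_basis_in_hspan:
  "3 dvd i \<Longrightarrow> ideal_basis x (i, t) \<in> hspan (ideal_basis x) {(i, t). 3 dvd i}"
  by (rule hspan_base) simp

lemma residue_in_hspan:
  fixes f :: "int \<Rightarrow> 'a::field hvec"
  assumes balanced: "residue_balanced f" and mod_eq: "\<And>c c'. c mod 3 = c' mod 3 \<Longrightarrow> f c = f c'"
    and "f 1 \<in> hspan g J" "f 2 \<in> hspan g J"
  shows "f c \<in> hspan g J"
proof -
  have "f 0 = - (f 1 + f 2)"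
    using balanced[unfolded residue_balanced_def, rule_format, of 0]
    by (simp only: eq_neg_iff_add_eq_0 add.assoc) simp
  then have "f 0 \<in> hspan g J"
    using assms(3,4) by (simp only: hspan_uminus hspan_add)
  then show ?thesis
    using assms(3,4) mod_eq[of c 0] mod_eq[of c 1] mod_eq[of c 2]
    by (cases c rule: mod3_cases) simp_all
qed

lemma sprod_in_hspan: "(\<And>m. q m \<in> hspan g J) \<Longrightarrow> sprod q i n \<in> hspan g J"
  by (simp add: sprod_def hspan_diff hspan_sc hspan_add)

context
  fixes \<beta> :: "nat \<Rightarrow> 'a::field" and k :: nat
begin

abbreviation xspan :: "'a hvec set" where
  "xspan \<equiv> hspan (ideal_basis (xres \<beta> k 1)) {(i, t). 3 dvd i}"

lemma ideal_basis_xres: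
  "ideal_basis (xres \<beta> k 1) (i, t) = (if t then uminus else id)
     (if i = 0 then xres \<beta> k (rr (\<not> t)) else sxres \<beta> k (rr (\<not> t)) (int i))"
proof (cases t)
  case True
  have "xres \<beta> k (- 1) = xres \<beta> k 2" "sxres \<beta> k (- 1) = sxres \<beta> k 2"
    by (simp_all add: xres_mod_eq sxres_mod_eq)
  with True show ?thesis
    by (simp add: ideal_basis_def sv_def hmult_S_xres tau0_xres tau0_sxres)
qed (simp add: ideal_basis_def sv_def hmult_S_xres)

lemma finite_hsupp_ideal_basis_xres: "finite (hsupp (ideal_basis (xres \<beta> k 1) j))"
  by (cases j) (simp add: ideal_basis_xres)

lemma xres_or_sxres_in_xspan:
  assumes "3 dvd i"
  shows "(if i = 0 then xres \<beta> k c else sxres \<beta> k c (int i)) \<in> xspan"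
proof (rule residue_in_hspan[where f = "\<lambda>c. if i = 0 then xres \<beta> k c else sxres \<beta> k c (int i)"])
  show "residue_balanced (\<lambda>c. if i = 0 then xres \<beta> k c else sxres \<beta> k c (int i))"
    using residue_balanced_xres[of \<beta> k] residue_balanced_sxres[of \<beta> k "int i"]
    by (cases "i = 0") simp_all
  show "(if i = 0 then xres \<beta> k c else sxres \<beta> k c (int i))
      = (if i = 0 then xres \<beta> k c' else sxres \<beta> k c' (int i))"
    if "c mod 3 = c' mod 3" for c c'
    using that by (simp add: xres_mod_eq[of c c'] sxres_mod_eq[of c c'])
  show "(if i = 0 then xres \<beta> k 1 else sxres \<beta> k 1 (int i)) \<in> xspan"
    using ideal_basis_in_hspan[OF assms, of "xres \<beta> k 1" False] by (auto simp: ideal_basis_xres)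
  show "(if i = 0 then xres \<beta> k 2 else sxres \<beta> k 2 (int i)) \<in> xspan"
    using hspan_uminus[OF ideal_basis_in_hspan[OF assms, of "xres \<beta> k 1" True]]
    by (auto simp: ideal_basis_xres)
qed

lemma xres_in_xspan: "xres \<beta> k c \<in> xspan"
  using xres_or_sxres_in_xspan[of 0 c] by simp

lemma sxres_in_xspan: "sxres \<beta> k c i \<in> xspan"
proof (cases "3 dvd i")
  case False
  then show ?thesis
    by (simp add: sxres_not_dvd hspan_sc xres_in_xspan)
next
  case True
  then have "3 dvd nat \<bar>i\<bar>"
    by simp
  moreover have "sxres \<beta> k c i = sxres \<beta> k c (int (nat \<bar>i\<bar>))"
    by (simp add: sxres_minus abs_if)
  ultimately show ?thesis
    using xres_or_sxres_in_xspan[of "nat \<bar>i\<bar>" c]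
    by (simp add: sxres_zero hspan_zero split: if_splits)
qed

lemma hmult_ev_xres_in_xspan:
  assumes three: "(3::'a) \<noteq> 0" and "hvalid b"
  shows "hmult (ev b) (xres \<beta> k c) \<in> xspan"
proof (cases b)
  case (A a)
  then show ?thesis
    by (simp add: hmult_A_xres hspan_diff hspan_sc xres_in_xspan)
next
  case (S j)
  then show ?thesis
    by (simp add: hmult_S_xres sxres_in_xspan)
next
  case (P t h)
  then show ?thesis
    by (simp add: hmult_P_xres[OF three] hspan_diff hspan_sc sxres_in_xspan)
qed

lemma hmult_ev_sxres_in_xspan:
  assumes three: "(3::'a) \<noteq> 0" and "hvalid b"
  shows "hmult (ev b) (sxres \<beta> k c i) \<in> xspan"
proof (cases "3 dvd i")
  case False
  then show ?thesis
    using hmult_ev_xres_in_xspan[OF assms]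
    by (simp add: sxres_not_dvd hlinear_sc[OF hlinear_hmult] hspan_sc)
next
  case True
  show ?thesis
  proof (cases b)
    case (A a)
    then show ?thesis
      by (simp add: hmult_A_sxres hspan_diff hspan_sc sxres_in_xspan)
  next
    case (S j)
    then show ?thesis
      by (simp add: hmult_S_sxres[OF True] sprod_in_hspan sxres_in_xspan)
  next
    case (P t h)
    then show ?thesis
      by (simp add: hmult_P_sxres[OF three True] sprod_in_hspan hspan_diff hspan_sc sxres_in_xspan)
  qed
qed

lemma hmult_ev_ideal_basis_xres_in_xspan:
  assumes "(3::'a) \<noteq> 0" "hvalid b"
  shows "hmult (ev b) (ideal_basis (xres \<beta> k 1) j) \<in> xspan"
  using hmult_ev_xres_in_xspan[OF assms] hmult_ev_sxres_in_xspan[OF assms]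
  by (cases j) (auto simp: ideal_basis_xres hlinear_uminus[OF hlinear_hmult] intro: hspan_uminus)

(* On the span of the p's, \<tau>0 coincides with multiplication by a_0 - 3/2; this is how the
   elements x^\<tau>0 and (s_i x)^\<tau>0 of the basis are obtained inside the ideal. *)
lemma tau0_xres_eq_hmult_a0:
  "tau0 (xres \<beta> k c) = hmult (av 0) (xres \<beta> k c) + sc (- 3/2) (xres \<beta> k c)"
  by (simp add: av_def hmult_A_xres tau0_xres fun_eq_iff)

lemma tau0_sxres_eq_hmult_a0:
  "tau0 (sxres \<beta> k c i) = hmult (av 0) (sxres \<beta> k c i) + sc (- 3/2) (sxres \<beta> k c i)"
  by (simp add: av_def hmult_A_sxres tau0_sxres fun_eq_iff)

lemma ideal_basis_xres_in_hideal: "ideal_basis (xres \<beta> k 1) (i, t) \<in> hideal (xres \<beta> k 1)"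
proof -
  let ?v = "ideal_basis (xres \<beta> k 1) (i, False)"
  have "sv i \<in> Hcarrier" if "i \<noteq> 0"
    using that by (simp add: sv_def Hcarrier_def)
  then have v: "?v \<in> hideal (xres \<beta> k 1)"
    by (auto simp: ideal_basis_def intro: hideal.gen hideal.mult)
  have "av 0 \<in> Hcarrier"
    by (simp add: av_def Hcarrier_def)
  then have "hmult (av 0) ?v + sc (- 3/2) ?v \<in> hideal (xres \<beta> k 1)"
    using v by (intro hideal.add hideal.mult hideal.smult)
  moreover have "tau0 ?v = hmult (av 0) ?v + sc (- 3/2) ?v"
    by (simp add: ideal_basis_xres tau0_xres_eq_hmult_a0 tau0_sxres_eq_hmult_a0)
  ultimately show ?thesis
    using v by (cases t) (simp_all add: ideal_basis_def)
qed

lemma hideal_xres_eq_xspan: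
  assumes "(3::'a) \<noteq> 0"
  shows "hideal (xres \<beta> k 1) = xspan"
proof
  show "hideal (xres \<beta> k 1) \<subseteq> xspan"
    by (rule hideal_subset_hspan[OF xres_in_xspan finite_hsupp_ideal_basis_xres
          hmult_ev_ideal_basis_xres_in_xspan[OF assms]])
  show "xspan \<subseteq> hideal (xres \<beta> k 1)"
    by (rule hspan_subset_hideal) (auto simp: ideal_basis_xres_in_hideal)
qed

lemma xres_rr_coord:
  assumes "1 \<le> k" "3 * k \<le> m" "3 dvd m"
  shows "xres \<beta> k (rr r) (P r' m) = (if r' = r \<and> m = 3 * k then \<beta> (3 * k) else 0)"
proof -
  have m: "0 < m" "3 dvd m"
    using assms by auto
  have "xres \<beta> k (rr r) (P r' m) = (\<Sum>j\<in>{1..k}. \<beta> (3 * j) * pint (rr r) (int (3 * j)) (P r' m))"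
    unfolding xres_def wsum_def sum_fun_apply sc_apply ..
  also have "\<dots> = (\<Sum>j\<in>{1..k}. if j = k then (if r' = r \<and> m = 3 * k then \<beta> (3 * k) else 0) else 0)"
    using assms by (intro sum.cong) (auto simp: pint_rr_apply[OF m])
  also have "\<dots> = (if r' = r \<and> m = 3 * k then \<beta> (3 * k) else 0)"
    using assms by simp
  finally show ?thesis .
qed

lemma sxres_rr_coord:
  assumes "1 \<le> k" "0 < i" "i + 3 * k \<le> m" "3 dvd m"
  shows "sxres \<beta> k (rr r) (int i) (P r' m) =
    (if r' = r \<and> m = i + 3 * k then - 3/8 * \<beta> (3 * k) else 0)"
proof -
  have m: "0 < m" "3 dvd m"
    using assms by auto
  have "sxres \<beta> k (rr r) (int i) (P r' m)
      = (\<Sum>j\<in>{1..k}. \<beta> (3 * j) * sprod (pint (rr r)) (int i) (int (3 * j)) (P r' m))"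
    unfolding sxres_def wsum_def sum_fun_apply sc_apply ..
  also have "\<dots> = (\<Sum>j\<in>{1..k}.
      if j = k then (if r' = r \<and> m = i + 3 * k then - 3/8 * \<beta> (3 * k) else 0) else 0)"
  proof (rule sum.cong)
    fix j
    assume j: "j \<in> {1..k}"
    have "int m \<noteq> \<bar>int i\<bar>" "int m \<noteq> \<bar>int (3 * j)\<bar>" "int m \<noteq> \<bar>int i - int (3 * j)\<bar>"
      using j assms by auto
    moreover have "int m = \<bar>int i + int (3 * j)\<bar> \<longleftrightarrow> j = k \<and> m = i + 3 * k"
      using j assms by auto
    ultimately show "\<beta> (3 * j) * sprod (pint (rr r)) (int i) (int (3 * j)) (P r' m)
        = (if j = k then (if r' = r \<and> m = i + 3 * k then - 3/8 * \<beta> (3 * k) else 0) else 0)"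
      unfolding sprod_def minus_apply plus_fun_apply sc_apply pint_rr_apply[OF m]
      by (simp del: of_nat_mult)
  qed simp
  also have "\<dots> = (if r' = r \<and> m = i + 3 * k then - 3/8 * \<beta> (3 * k) else 0)"
    using assms by simp
  finally show ?thesis .
qed

lemma ideal_basis_xres_coord:
  assumes "1 \<le> k" "i + 3 * k \<le> m" "3 dvd m"
  shows "ideal_basis (xres \<beta> k 1) (i, t) (P r m) =
    (if r = (\<not> t) \<and> m = i + 3 * k
     then (if t then -1 else 1) * (if i = 0 then 1 else - 3/8) * \<beta> (3 * k) else 0)"
proof (cases "i = 0")
  case True
  then have "xres \<beta> k 1 (P r m) = (if r \<and> m = 3 * k then \<beta> (3 * k) else 0)"
    "xres \<beta> k 2 (P r m) = (if \<not> r \<and> m = 3 * k then \<beta> (3 * k) else 0)"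
    using xres_rr_coord[of m True r] xres_rr_coord[of m False r] assms by simp_all
  with True show ?thesis
    unfolding ideal_basis_xres by (cases t) auto
next
  case False
  then have "sxres \<beta> k 1 (int i) (P r m) = (if r \<and> m = i + 3 * k then - 3/8 * \<beta> (3 * k) else 0)"
    "sxres \<beta> k 2 (int i) (P r m) = (if \<not> r \<and> m = i + 3 * k then - 3/8 * \<beta> (3 * k) else 0)"
    using sxres_rr_coord[of i m True r] sxres_rr_coord[of i m False r] assms by simp_all
  with False show ?thesis
    unfolding ideal_basis_xres by (cases t) auto
qed

lemma hlin_indep_ideal_basis_xres:
  assumes two: "(2::'a) \<noteq> 0" and three: "(3::'a) \<noteq> 0" and k: "1 \<le> k" and "\<beta> (3 * k) \<noteq> 0"
  shows "hlin_indep (ideal_basis (xres \<beta> k 1)) {(i, t). 3 dvd i}"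
proof (rule hlin_indep_triangular[where rank = fst and pt = "\<lambda>(i, t). P (\<not> t) (i + 3 * k)"])
  have "(8::'a) \<noteq> 0"
    using power_not_zero[OF two, of 3] by simp
  then have "- 3/8 \<noteq> (0::'a)"
    using three by simp
  then show "ideal_basis (xres \<beta> k 1) j ((\<lambda>(i, t). P (\<not> t) (i + 3 * k)) j) \<noteq> 0"
    if "j \<in> {(i, t). 3 dvd i}" for j
    using that assms by (cases j) (simp add: ideal_basis_xres_coord)
  show "ideal_basis (xres \<beta> k 1) j' ((\<lambda>(i, t). P (\<not> t) (i + 3 * k)) j) = 0"
    if "j \<in> {(i, t). 3 dvd i}" "j' \<noteq> j" "fst j' \<le> fst j" for j j'
  proof -
    obtain i t i' t' where j: "j = (i, t)" "j' = (i', t')"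
      by fastforce
    then have "3 dvd i + 3 * k" "i' + 3 * k \<le> i + 3 * k"
      "\<not> ((\<not> t) = (\<not> t') \<and> i + 3 * k = i' + 3 * k)"
      using that by auto
    then show ?thesis
      unfolding j using ideal_basis_xres_coord[OF k, of i' "i + 3 * k" t' "\<not> t"] by auto
  qed
qed

end

theorem theorem7p2:
  fixes \<beta> :: "nat \<Rightarrow> 'a::field" and k :: nat
  assumes "(2::'a) \<noteq> 0" and "(3::'a) \<noteq> 0"
    and "1 \<le> k" and "\<beta> (3 * k) \<noteq> 0"
  defines "x \<equiv> (\<lambda>b. \<Sum>j\<in>{1..k}. \<beta> (3 * j) * pv 1 (3 * j) b)"
  shows "is_hbasis
           (\<lambda>(i, t). (if t then tau0 else id) (if i = 0 then x else hmult (sv i) x))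
           {(i, t). 3 dvd i}
           (hideal x)"
proof -
  have x: "x = xres \<beta> k 1"
    unfolding x_def xres_def wsum_def pint_def abs_of_nat nat_int fun_eq_iff sum_fun_apply sc_apply
    by simp
  show ?thesis
    using hlin_indep_ideal_basis_xres[where \<beta> = \<beta> and k = k, OF assms(1-4)]
      hideal_xres_eq_xspan[where \<beta> = \<beta> and k = k, OF assms(2)]
    unfolding is_hbasis_def x ideal_basis_def by simp
qed

end
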